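(* Let ${}^{+}Q^H_k(x)$ be the coefficient polynomials of the linear transformation $x^n\mapsto H_n(x)$ and ${}^{-}Q^H_k(x)$ the coefficient polynomials of the linear transformation $x^n\mapsto H_n(-x)$ on $\mathbb{R}[x]$. Then for all $k\ge0$, ${}^{-}Q^H_k(x)={}^{+}Q^H_k(-3x)$.
   Context: $H_n$ denotes the $n$th physicist Hermite polynomial, $H_n(x)=n!\sum_{m=0}^{\lfloor n/2\rfloor}\frac{(-1)^m}{m!(n-2m)!}(2x)^{n-2m}$. Every linear operator $T\colon\mathbb{C}[x]\to\mathbb{C}[x]$ has a unique representation $T=\sum_{k=0}^\infty \frac{Q_k(x)}{k!}D^k$ with $D=d/dx$ and polynomials $Q_k(x)$, called the coefficient polynomials of $T$. *)

theory Defs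
  imports "HOL-Computational_Algebra.Polynomial"
begin

definition hermite :: "nat \<Rightarrow> real poly" where
  "hermite n = (\<Sum>m\<le>n div 2.
      monom (fact n * (-1) ^ m * 2 ^ (n - 2 * m) / (fact m * fact (n - 2 * m))) (n - 2 * m))"

definition hermite_plus :: "real poly \<Rightarrow> real poly" where
  "hermite_plus p = (\<Sum>i\<le>degree p. smult (coeff p i) (hermite i))"

definition hermite_minus :: "real poly \<Rightarrow> real poly" where
  "hermite_minus p = (\<Sum>i\<le>degree p. smult (coeff p i) (pcompose (hermite i) [:0, -1:]))"

definition is_coeff_polys :: "(real poly \<Rightarrow> real poly) \<Rightarrow> (nat \<Rightarrow> real poly) \<Rightarrow> bool" where
  "is_coeff_polys T Q \<longleftrightarrow>
     (\<forall>p. T p = (\<Sum>k\<le>degree p. smult (1 / fact k) (Q k * (pderiv ^^ k) p)))"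

definition coeff_polys :: "(real poly \<Rightarrow> real poly) \<Rightarrow> nat \<Rightarrow> real poly" where
  "coeff_polys T = (THE Q. is_coeff_polys T Q)"

end

theory Submission
  imports Defs
begin

text \<open>Hermite polynomials satisfy the addition formula
  H_n(u + y) = \<Sum>_k (n choose k) H_k(u) (2y)^(n-k).
  As Q_k/k! D^k x^n = (n choose k) Q_k x^(n-k), taking u = (c - 1/2) x and y = x/2 shows that
  x^n \<mapsto> H_n(cx) has the coefficient polynomials Q_k(x) = H_k((c - 1/2) x); these are unique,
  since the image of x^n determines Q_n once Q_0, ..., Q_(n-1) are known.
  So the coefficient polynomials are H_k(x/2) for c = 1 and H_k(-3x/2) for c = -1.\<close>

lemma smult_sum_right: "smult c (\<Sum>x\<in>A. f x) = (\<Sum>x\<in>A. smult c (f x))"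
  by (induction A rule: infinite_finite_induct) (simp_all add: smult_add_right)

lemma times_monom_eq_smult:
  fixes q :: "'a::comm_semiring_1 poly"
  shows "q * monom c n = smult c (q * monom 1 n)"
proof -
  have "q * monom c n = q * smult c (monom 1 n)"
    by (simp add: smult_monom del: mult_smult_right)
  also have "\<dots> = smult c (q * monom 1 n)"
    by (rule mult_smult_right)
  finally show ?thesis .
qed

lemma higher_pderiv_monom_choose:
  fixes c :: "'a::field_char_0"
  shows "smult (inverse (fact k)) ((pderiv ^^ k) (monom c n)) = monom (of_nat (n choose k) * c) (n - k)"
proof (rule poly_eqI)
  fix j
  have "pochhammer (of_nat (Suc j)) k / fact k = (of_nat ((j + k) choose k) :: 'a)"
    by (simp add: binomial_gbinomial gbinomial_pochhammer' of_nat_add add.commute)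
  then show "coeff (smult (inverse (fact k)) ((pderiv ^^ k) (monom c n))) j
      = coeff (monom (of_nat (n choose k) * c) (n - k)) j"
    by (auto simp: coeff_higher_pderiv coeff_monom field_simps)
qed

text \<open>The image of x^n under \<Sum>_k Q_k/k! D^k.\<close>

definition diff_op_monom :: "(nat \<Rightarrow> real poly) \<Rightarrow> nat \<Rightarrow> real poly" where
  "diff_op_monom Q n = (\<Sum>k\<le>n. smult (of_nat (n choose k)) (Q k * monom 1 (n - k)))"

lemma diff_op_as_sum_of_monoms:
  fixes p :: "real poly"
  shows "(\<Sum>k\<le>degree p. smult (1 / fact k) (Q k * (pderiv ^^ k) p)) =
    (\<Sum>i\<le>degree p. smult (coeff p i) (diff_op_monom Q i))"
proof -
  define d where "d = degree p"
  define t where "t i k = smult (coeff p i) (smult (of_nat (i choose k)) (Q k * monom 1 (i - k)))" for i k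
  have "smult (1 / fact k) (Q k * (pderiv ^^ k) p) = (\<Sum>i\<le>d. t i k)" for k
  proof -
    have "smult (1 / fact k) (Q k * (pderiv ^^ k) p) = Q k * smult (inverse (fact k)) ((pderiv ^^ k) p)"
      by (simp add: inverse_eq_divide)
    also have "smult (inverse (fact k)) ((pderiv ^^ k) p) =
        (\<Sum>i\<le>d. monom (of_nat (i choose k) * coeff p i) (i - k))"
    proof -
      have "p = (\<Sum>i\<le>d. monom (coeff p i) i)"
        by (simp add: d_def poly_as_sum_of_monoms)
      then have "(pderiv ^^ k) p = (\<Sum>i\<le>d. (pderiv ^^ k) (monom (coeff p i) i))"
        by (metis higher_pderiv_sum)
      then show ?thesis
        by (simp add: smult_sum_right higher_pderiv_monom_choose)
    qed
    also have "Q k * \<dots> = (\<Sum>i\<le>d. Q k * monom (of_nat (i choose k) * coeff p i) (i - k))"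
      by (rule sum_distrib_left)
    also have "\<dots> = (\<Sum>i\<le>d. t i k)"
      by (intro sum.cong refl, subst times_monom_eq_smult) (simp add: t_def mult.commute)
    finally show ?thesis .
  qed
  then have "(\<Sum>k\<le>d. smult (1 / fact k) (Q k * (pderiv ^^ k) p)) = (\<Sum>i\<le>d. \<Sum>k\<le>d. t i k)"
    by (simp add: sum.swap[of t "{..d}" "{..d}"])
  also have "\<dots> = (\<Sum>i\<le>d. \<Sum>k\<le>i. t i k)"
    by (intro sum.cong refl sum.mono_neutral_right) (auto simp: t_def)
  also have "\<dots> = (\<Sum>i\<le>d. smult (coeff p i) (diff_op_monom Q i))"
    by (simp add: t_def diff_op_monom_def smult_sum_right)
  finally show ?thesis by (simp add: d_def)
qed

lemma is_coeff_polys_iff_diff_op_monom: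
  "is_coeff_polys T Q \<longleftrightarrow> (\<forall>p. T p = (\<Sum>i\<le>degree p. smult (coeff p i) (diff_op_monom Q i)))"
  unfolding is_coeff_polys_def diff_op_as_sum_of_monoms ..

lemma is_coeff_polys_monom:
  assumes "is_coeff_polys T Q"
  shows "T (monom 1 n) = diff_op_monom Q n"
proof -
  have "(\<Sum>i\<le>n. smult (coeff (monom 1 n) i) (diff_op_monom Q i)) =
      (\<Sum>i\<le>n. if i = n then diff_op_monom Q i else 0)"
    by (intro sum.cong) auto
  then show ?thesis
    using assms by (simp add: is_coeff_polys_iff_diff_op_monom degree_monom_eq)
qed

lemma diff_op_monom_split:
  "diff_op_monom Q n = Q n + (\<Sum>k<n. smult (of_nat (n choose k)) (Q k * monom 1 (n - k)))"
proof -
  have "{..n} = insert n {..<n}" by auto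
  then show ?thesis by (simp add: diff_op_monom_def)
qed

lemma is_coeff_polys_unique:
  assumes "is_coeff_polys T Q" and "is_coeff_polys T Q'"
  shows "Q = Q'"
proof
  fix n show "Q n = Q' n"
  proof (induction n rule: less_induct)
    case (less n)
    have "diff_op_monom Q n = diff_op_monom Q' n"
      using is_coeff_polys_monom[OF assms(1)] is_coeff_polys_monom[OF assms(2)] by simp
    moreover have "(\<Sum>k<n. smult (of_nat (n choose k)) (Q k * monom 1 (n - k))) =
        (\<Sum>k<n. smult (of_nat (n choose k)) (Q' k * monom 1 (n - k)))"
      using less.IH by (intro sum.cong) auto
    ultimately show ?case by (simp add: diff_op_monom_split)
  qed
qed

lemma coeff_polys_eqI: "is_coeff_polys T Q \<Longrightarrow> coeff_polys T = Q"
  unfolding coeff_polys_def by (rule the_equality) (auto intro: is_coeff_polys_unique)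

lemma poly_hermite:
  "poly (hermite n) x =
     (\<Sum>m\<le>n div 2. fact n * (-1) ^ m / (fact m * fact (n - 2 * m)) * (2 * x) ^ (n - 2 * m))"
  by (simp add: hermite_def poly_sum poly_monom power_mult_distrib mult.assoc)

lemma sum_triangle_swap:
  fixes n :: nat
  shows "(\<Sum>k\<le>n. \<Sum>m\<le>k div 2. f k m) = (\<Sum>m\<le>n div 2. \<Sum>j\<le>n - 2 * m. f (2 * m + j) m)"
proof -
  have "(\<Sum>k\<le>n. \<Sum>m\<le>k div 2. f k m) = (\<Sum>(k, m)\<in>(SIGMA k:{..n}. {..k div 2}). f k m)"
    by (rule sum.Sigma) auto
  also have "\<dots> = (\<Sum>(m, j)\<in>(SIGMA m:{..n div 2}. {..n - 2 * m}). f (2 * m + j) m)"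
    by (rule sum.reindex_bij_witness[where i = "\<lambda>(m, j). (2 * m + j, m)" and j = "\<lambda>(k, m). (m, k - 2 * m)"])
      auto
  also have "\<dots> = (\<Sum>m\<le>n div 2. \<Sum>j\<le>n - 2 * m. f (2 * m + j) m)"
    by (rule sum.Sigma[symmetric]) auto
  finally show ?thesis .
qed

lemma poly_hermite_add:
  fixes x y :: real
  shows "poly (hermite n) (x + y) =
    (\<Sum>k\<le>n. of_nat (n choose k) * poly (hermite k) x * (2 * y) ^ (n - k))"
proof -
  define a :: "nat \<Rightarrow> nat \<Rightarrow> real"
    where "a n m = fact n * (-1) ^ m / (fact m * fact (n - 2 * m))" for n m
  have a_choose: "of_nat (n choose (2 * m + j)) * a (2 * m + j) m = a n m * of_nat ((n - 2 * m) choose j)"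
    if "2 * m + j \<le> n" for m j
    using that by (simp add: a_def binomial_fact field_simps)
  have "poly (hermite n) (x + y) = (\<Sum>m\<le>n div 2. a n m * (2 * x + 2 * y) ^ (n - 2 * m))"
    by (simp add: poly_hermite a_def algebra_simps)
  also have "\<dots> = (\<Sum>m\<le>n div 2. \<Sum>j\<le>n - 2 * m.
      a n m * of_nat ((n - 2 * m) choose j) * (2 * x) ^ j * (2 * y) ^ (n - 2 * m - j))"
    by (simp add: binomial_ring sum_distrib_left mult.assoc)
  also have "\<dots> = (\<Sum>m\<le>n div 2. \<Sum>j\<le>n - 2 * m.
      of_nat (n choose (2 * m + j)) * a (2 * m + j) m * (2 * x) ^ j * (2 * y) ^ (n - (2 * m + j)))"
    by (intro sum.cong refl) (simp add: a_choose)
  also have "\<dots> = (\<Sum>k\<le>n. \<Sum>m\<le>k div 2.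
      of_nat (n choose k) * a k m * (2 * x) ^ (k - 2 * m) * (2 * y) ^ (n - k))"
    by (simp add: sum_triangle_swap)
  also have "\<dots> = (\<Sum>k\<le>n. of_nat (n choose k) * poly (hermite k) x * (2 * y) ^ (n - k))"
    by (simp add: poly_hermite a_def sum_distrib_left sum_distrib_right mult.assoc)
  finally show ?thesis .
qed

lemma hermite_dilation_eq_diff_op_monom:
  "hermite n \<circ>\<^sub>p [:0, c:] = diff_op_monom (\<lambda>k. hermite k \<circ>\<^sub>p [:0, c - 1 / 2:]) n"
proof -
  have "poly (hermite n \<circ>\<^sub>p [:0, c:]) t =
      poly (diff_op_monom (\<lambda>k. hermite k \<circ>\<^sub>p [:0, c - 1 / 2:]) n) t" for t
  proof -
    have "poly (hermite n \<circ>\<^sub>p [:0, c:]) t = poly (hermite n) ((c - 1 / 2) * t + t / 2)"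
      by (simp add: poly_pcompose algebra_simps)
    also have "\<dots> = (\<Sum>k\<le>n. of_nat (n choose k) * poly (hermite k) ((c - 1 / 2) * t) * t ^ (n - k))"
      by (simp add: poly_hermite_add)
    also have "\<dots> = poly (diff_op_monom (\<lambda>k. hermite k \<circ>\<^sub>p [:0, c - 1 / 2:]) n) t"
      by (simp add: diff_op_monom_def poly_sum poly_pcompose poly_monom mult_ac)
    finally show ?thesis .
  qed
  then show ?thesis by (simp add: poly_eq_poly_eq_iff[symmetric] fun_eq_iff)
qed

lemma is_coeff_polys_hermite_dilation:
  "is_coeff_polys (\<lambda>p. \<Sum>i\<le>degree p. smult (coeff p i) (hermite i \<circ>\<^sub>p [:0, c:]))
     (\<lambda>k. hermite k \<circ>\<^sub>p [:0, c - 1 / 2:])"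
  by (simp only: is_coeff_polys_iff_diff_op_monom hermite_dilation_eq_diff_op_monom[symmetric]) simp

theorem corollary4p2:
  fixes k :: nat
  shows "coeff_polys hermite_minus k = pcompose (coeff_polys hermite_plus k) [:0, -3:]"
proof -
  have "hermite_plus = (\<lambda>p. \<Sum>i\<le>degree p. smult (coeff p i) (hermite i \<circ>\<^sub>p [:0, 1:]))"
    by (simp add: fun_eq_iff hermite_plus_def)
  then have plus: "coeff_polys hermite_plus k = hermite k \<circ>\<^sub>p [:0, 1 / 2:]"
    using coeff_polys_eqI[OF is_coeff_polys_hermite_dilation[of 1]] by simp
  have "hermite_minus = (\<lambda>p. \<Sum>i\<le>degree p. smult (coeff p i) (hermite i \<circ>\<^sub>p [:0, -1:]))"
    by (simp add: fun_eq_iff hermite_minus_def)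
  then have minus: "coeff_polys hermite_minus k = hermite k \<circ>\<^sub>p [:0, - 3 / 2:]"
    using coeff_polys_eqI[OF is_coeff_polys_hermite_dilation[of "-1"]] by simp
  have "[:0, - 3 / 2:] = [:0, 1 / 2:] \<circ>\<^sub>p [:0, - 3 :: real:]"
    by (simp add: pcompose_pCons)
  then show ?thesis
    by (simp add: plus minus pcompose_assoc)
qed

end
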